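(* Let $d\in\mathbb{N}$ and let $\mathcal{P}$ be a partition of $\mathbb{R}^{d}$ with the adjacent-or-far property. Suppose there exists $D\in(0,\infty)$ such that $\operatorname{diam}(X)<D$ for all $X\in\mathcal{P}$. Then $\mathcal{P}$ contains a $(d+1)$-clique.
   Context: On $\mathbb{R}^d$ use $d_{max}(\vec{x},\vec{y})=\max_i|x_i-y_i|$ and $\operatorname{diam}(X)=\sup\{d_{max}(\vec{x},\vec{y}):\vec{x},\vec{y}\in X\}$. Members $X,Y$ of $\mathcal{P}$ are adjacent if $\overline{X}\cap\overline{Y}\neq\emptyset$ (closures); an $n$-clique is a set of $n$ distinct pairwise adjacent members. $\mathcal{P}$ has the adjacent-or-far property if there exists $\epsilon\in(0,\infty)$ such that for all $X,Y\in\mathcal{P}$, either $X$ and $Y$ are adjacent or $d_{max}(\vec{x},\vec{y})>\epsilon$ for all $\vec{x}\in X$, $\vec{y}\in Y$. *)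

theory Defs
  imports "HOL-Analysis.Analysis" "HOL-Library.Disjoint_Sets" "HOL-Library.Extended_Real"
begin

text \<open>Maximum (sup) metric on R^d, with R^d modelled as real ^ 'n, d = CARD('n).\<close>
definition dmax :: "real ^ 'n \<Rightarrow> real ^ 'n \<Rightarrow> real" where
  "dmax x y = Max (range (\<lambda>i. \<bar>x $ i - y $ i\<bar>))"

text \<open>Diameter w.r.t. dmax, as an extended real (so unbounded sets have diameter infinity).\<close>
definition diam_max :: "(real ^ 'n) set \<Rightarrow> ereal" where
  "diam_max X = (SUP p \<in> X \<times> X. ereal (dmax (fst p) (snd p)))"

definition adjacent :: "(real ^ 'n) set \<Rightarrow> (real ^ 'n) set \<Rightarrow> bool" where
  "adjacent X Y \<longleftrightarrow> closure X \<inter> closure Y \<noteq> {}"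

definition is_clique :: "((real ^ 'n) set) set \<Rightarrow> (real ^ 'n) set set \<Rightarrow> nat \<Rightarrow> bool" where
  "is_clique P C n \<longleftrightarrow> C \<subseteq> P \<and> finite C \<and> card C = n \<and>
     (\<forall>X\<in>C. \<forall>Y\<in>C. adjacent X Y)"

definition adjacent_or_far :: "((real ^ 'n) set) set \<Rightarrow> bool" where
  "adjacent_or_far P \<longleftrightarrow> (\<exists>\<epsilon>>0. \<forall>X\<in>P. \<forall>Y\<in>P.
     adjacent X Y \<or> (\<forall>x\<in>X. \<forall>y\<in>Y. dmax x y > \<epsilon>))"

end

theory Submission
  imports Defs
begin

text \<open>Cover a box of side \<open>p\<epsilon>\<close>, with \<open>p\<epsilon> \<ge> D\<close>, by a cubical grid of mesh \<open>\<epsilon>\<close>. Label a grid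
  point by the first coordinate \<open>i\<close> such that the member of \<open>\<P>\<close> containing it has no point
  with \<open>x\<^sub>i \<le> 0\<close> (or by \<open>d\<close> if there is none). Since the members have diameter \<open>< D\<close>, this is a Sperner labelling, so by
  Kuhn's combinatorial lemma some grid cell carries all \<open>d + 1\<close> labels. The corresponding
  \<open>d + 1\<close> members are distinct, because the label depends only on the member, and they contain
  points at mutual distance \<open>\<le> \<epsilon>\<close>, so the adjacent-or-far property makes them pairwise adjacent.\<close>

lemma kuhn_fully_labelled_cell:
  fixes lab :: "(nat \<Rightarrow> nat) \<Rightarrow> nat \<Rightarrow> nat"
  assumes "0 < p"
    and "\<And>x j. (\<forall>j. x j \<le> p) \<Longrightarrow> j < n \<Longrightarrow> x j = 0 \<Longrightarrow> lab x j = 0"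
    and "\<And>x j. (\<forall>j. x j \<le> p) \<Longrightarrow> j < n \<Longrightarrow> x j = p \<Longrightarrow> lab x j = 1"
  obtains b :: "nat \<Rightarrow> nat" and v :: "nat \<Rightarrow> nat \<Rightarrow> nat"
  where "\<And>k j. k \<le> n \<Longrightarrow> b j \<le> v k j \<and> v k j \<le> b j + 1"
    and "\<And>k. k \<le> n \<Longrightarrow> reduced n (lab (v k)) = k"
proof -
  have "odd (card {s. ksimplex p n s \<and> (reduced n \<circ> lab) ` s = {..n}})"
    using assms by (intro kuhn_combinatorial) auto
  then have "{s. ksimplex p n s \<and> (reduced n \<circ> lab) ` s = {..n}} \<noteq> {}"
    by (rule odd_card_imp_not_empty)
  then obtain s where "ksimplex p n s" and full: "(reduced n \<circ> lab) ` s = {..n}"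
    by blast
  then obtain b u where "kuhn_simplex p n b u s"
    by (auto elim: ksimplex.cases)
  then interpret kuhn_simplex p n b u s .
  have "\<forall>k\<in>{..n}. \<exists>x\<in>s. reduced n (lab x) = k"
    using full by force
  then obtain v where "\<And>k. k \<le> n \<Longrightarrow> v k \<in> s \<and> reduced n (lab (v k)) = k"
    by (metis atMost_iff)
  with base_le le_Suc_base show thesis
    by (intro that[of b v]) auto
qed

lemma component_le_dmax: "\<bar>x $ i - y $ i\<bar> \<le> dmax x y"
  unfolding dmax_def by (rule Max_ge) auto

lemma dmax_le:
  assumes "\<And>i. \<bar>x $ i - y $ i\<bar> \<le> e"
  shows "dmax x y \<le> e"
  unfolding dmax_def using assms by (subst Max_le_iff) auto

lemma dmax_le_diam_max:
  assumes "x \<in> X" and "y \<in> X"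
  shows "ereal (dmax x y) \<le> diam_max X"
  unfolding diam_max_def using assms by (intro SUP_upper2[of "(x, y)"]) auto

definition grid_point :: "real \<Rightarrow> ('n \<Rightarrow> nat) \<Rightarrow> (nat \<Rightarrow> nat) \<Rightarrow> real ^ 'n" where
  "grid_point \<epsilon> h x = (\<chi> i. \<epsilon> * real (x (h i)))"

text \<open>Composed with \<^const>\<open>reduced\<close>, this gives the labelling described above, with the
  coordinates enumerated by \<open>h\<close>.\<close>

definition halfspace_label :: "('n \<Rightarrow> nat) \<Rightarrow> (real ^ 'n) set \<Rightarrow> nat \<Rightarrow> nat" where
  "halfspace_label h X j = (if \<exists>i. \<exists>y\<in>X. h i = j \<and> y $ i \<le> 0 then 0 else 1)"

lemma dmax_grid_points_in_cell:
  assumes "0 \<le> \<epsilon>"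
    and "\<And>j. b j \<le> u j \<and> u j \<le> b j + 1"
    and "\<And>j. b j \<le> w j \<and> w j \<le> b j + 1"
  shows "dmax (grid_point \<epsilon> h u) (grid_point \<epsilon> h w) \<le> \<epsilon>"
proof (rule dmax_le)
  fix i
  have "\<bar>real (u (h i)) - real (w (h i))\<bar> \<le> 1"
    using assms(2,3)[of "h i"] by linarith
  then have "\<epsilon> * \<bar>real (u (h i)) - real (w (h i))\<bar> \<le> \<epsilon>"
    using mult_left_mono[OF _ assms(1)] by fastforce
  then show "\<bar>grid_point \<epsilon> h u $ i - grid_point \<epsilon> h w $ i\<bar> \<le> \<epsilon>"
    using assms(1) unfolding grid_point_def by (simp add: abs_mult flip: right_diff_distrib)
qed

lemma halfspace_label_eq_0:
  assumes "grid_point \<epsilon> h x \<in> X" and "h i = j" and "x j = 0"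
  shows "halfspace_label h X j = 0"
proof -
  have "grid_point \<epsilon> h x $ i = 0"
    using assms(2,3) unfolding grid_point_def by simp
  then show ?thesis
    using assms(1,2) unfolding halfspace_label_def by force
qed

lemma halfspace_label_eq_1:
  assumes "grid_point \<epsilon> h x \<in> X" and "x j = p" and "D \<le> \<epsilon> * real p"
    and small: "\<And>y. y \<in> X \<Longrightarrow> dmax (grid_point \<epsilon> h x) y < D"
  shows "halfspace_label h X j = 1"
proof -
  have "0 < y $ i" if "y \<in> X" "h i = j" for y i
  proof -
    have "grid_point \<epsilon> h x $ i = \<epsilon> * real p"
      using \<open>x j = p\<close> that(2) unfolding grid_point_def by simp
    then show ?thesis
      using component_le_dmax[of "grid_point \<epsilon> h x" i y] small[OF that(1)] assms(3)
      by linarith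
  qed
  then show ?thesis
    unfolding halfspace_label_def by force
qed

lemma cover_has_close_points_in_distinct_members:
  fixes P :: "(real ^ 'n) set set"
  assumes cover: "\<Union>P = UNIV"
    and small: "\<And>X x y. X \<in> P \<Longrightarrow> x \<in> X \<Longrightarrow> y \<in> X \<Longrightarrow> dmax x y < D"
    and "0 < \<epsilon>"
  obtains C where "C \<subseteq> P" and "finite C" and "card C = CARD('n) + 1"
    and "\<And>X Y. X \<in> C \<Longrightarrow> Y \<in> C \<Longrightarrow> \<exists>x\<in>X. \<exists>y\<in>Y. dmax x y \<le> \<epsilon>"
proof -
  define n where "n = CARD('n)"
  obtain h where h: "bij_betw h (UNIV :: 'n set) {..<n}"
    using ex_bij_betw_finite_nat[of "UNIV :: 'n set"] by (auto simp: n_def atLeast0LessThan)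
  have "\<forall>y. \<exists>X. X \<in> P \<and> y \<in> X"
    using cover by blast
  then obtain member where member: "\<And>y. member y \<in> P \<and> y \<in> member y"
    by metis
  define lab where "lab x = halfspace_label h (member (grid_point \<epsilon> h x))" for x
  define p where "p = nat \<lceil>D / \<epsilon>\<rceil> + 1"
  have "D / \<epsilon> \<le> real p"
    unfolding p_def by linarith
  then have "D \<le> \<epsilon> * real p"
    using \<open>0 < \<epsilon>\<close> by (simp add: pos_divide_le_eq mult.commute)
  have lab0: "lab x j = 0" if "j < n" "x j = 0" for x j
  proof -
    obtain i where "h i = j"
      using h \<open>j < n\<close> by (metis bij_betw_iff_bijections lessThan_iff)
    then show ?thesis
      unfolding lab_def using \<open>x j = 0\<close> by (rule halfspace_label_eq_0[of \<epsilon> h x, OF conjunct2[OF member]])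
  qed
  have lab1: "lab x j = 1" if "x j = p" for x j
    unfolding lab_def
    using \<open>x j = p\<close> \<open>D \<le> \<epsilon> * real p\<close>
    by (rule halfspace_label_eq_1[of \<epsilon> h x, OF conjunct2[OF member]]) (use small member in blast)
  have "0 < p"
    unfolding p_def by simp
  then obtain b v where cell: "\<And>k j. k \<le> n \<Longrightarrow> b j \<le> v k j \<and> v k j \<le> b j + 1"
    and labelled: "\<And>k. k \<le> n \<Longrightarrow> reduced n (lab (v k)) = k"
    by (rule kuhn_fully_labelled_cell[of p n lab]) (use lab0 lab1 in blast)+
  define V where "V k = member (grid_point \<epsilon> h (v k))" for k
  have "inj_on V {..n}"
    using labelled by (intro inj_on_inverseI[where g = "\<lambda>X. reduced n (halfspace_label h X)"])
      (simp add: V_def lab_def)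
  then have "card (V ` {..n}) = n + 1"
    by (simp add: card_image)
  moreover have "\<exists>x\<in>V k. \<exists>y\<in>V l. dmax x y \<le> \<epsilon>" if "k \<le> n" "l \<le> n" for k l
  proof -
    have "dmax (grid_point \<epsilon> h (v k)) (grid_point \<epsilon> h (v l)) \<le> \<epsilon>"
      using \<open>0 < \<epsilon>\<close> cell[OF that(1)] cell[OF that(2)]
      by (intro dmax_grid_points_in_cell[where b = b]) auto
    then show ?thesis
      using member unfolding V_def by blast
  qed
  moreover have "V ` {..n} \<subseteq> P"
    using member unfolding V_def by blast
  ultimately show thesis
    by (intro that[of "V ` {..n}"]) (auto simp: n_def)
qed

theorem mainTheorem14:
  fixes P :: "(real ^ 'n) set set"
  assumes "partition_on UNIV P"
    and "adjacent_or_far P"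
    and "\<exists>D>0. \<forall>X\<in>P. diam_max X < ereal D"
  shows "\<exists>C. is_clique P C (CARD('n) + 1)"
proof -
  obtain \<epsilon> where "0 < \<epsilon>"
    and far: "\<forall>X\<in>P. \<forall>Y\<in>P. adjacent X Y \<or> (\<forall>x\<in>X. \<forall>y\<in>Y. \<epsilon> < dmax x y)"
    using assms(2) unfolding adjacent_or_far_def by blast
  obtain D where D: "\<forall>X\<in>P. diam_max X < ereal D"
    using assms(3) by blast
  have cover: "\<Union>P = UNIV"
    using assms(1) by (simp add: partition_on_def)
  have "dmax x y < D" if "X \<in> P" "x \<in> X" "y \<in> X" for X x y
  proof -
    have "ereal (dmax x y) < ereal D"
      using dmax_le_diam_max[OF that(2,3)] D that(1) by (meson order_le_less_trans)
    then show ?thesis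
      by simp
  qed
  then obtain C where C: "C \<subseteq> P" "finite C" "card C = CARD('n) + 1"
    and close: "\<And>X Y. X \<in> C \<Longrightarrow> Y \<in> C \<Longrightarrow> \<exists>x\<in>X. \<exists>y\<in>Y. dmax x y \<le> \<epsilon>"
    using cover_has_close_points_in_distinct_members[OF cover _ \<open>0 < \<epsilon>\<close>] by blast
  have "adjacent X Y" if "X \<in> C" "Y \<in> C" for X Y
    using far close[OF that] that C(1) by force
  with C show ?thesis
    unfolding is_clique_def by blast
qed

end
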